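(* Let $r,s,j$ be nonnegative integers with $j\le r$. Then $$X_+^{\,r+s-j}\,Y_+^{\,r-j}\,m_{1^j}(\mathbf{xy})\Big|_{\mathbf y=\mathbf x}=\sum_{j\le i\le r}\binom{i}{j}\binom{2(r-i)+s}{r-i}(r-j)!\,(r+s-j)!\;m_{2^i1^{2(r-i)+s}}(\mathbf x),$$ where $X_+=\sum_{i\ge1}(x_i-x_i^2\partial/\partial x_i)$, $Y_+=\sum_{i\ge1}(y_i-y_i^2\partial/\partial y_i)$ act on formal power series in $\mathbf x=(x_1,x_2,\dots)$, $\mathbf y=(y_1,y_2,\dots)$, and $m_{1^j}(\mathbf{xy})=\sum_{\beta\subset\mathbb N_{>0},|\beta|=j}\prod_{k\in\beta}x_ky_k$.
   Context: $m_\mu(\mathbf x)$ denotes the monomial symmetric function indexed by the partition $\mu$ (sum of all distinct monomials $x_{k_1}^{\mu_1}x_{k_2}^{\mu_2}\cdots$ with distinct indices); $2^i1^t$ is the partition with $i$ parts equal to $2$ and $t$ parts equal to $1$; $m_{1^0}=1$. *)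

theory Defs
  imports Main "HOL-Library.Multiset"
begin

text \<open>Formal power series with integer coefficients in countably many variables
  x_0, x_1, ... are represented by their coefficient functions: an exponent vector
  (monomial) is a function nat => nat; only finitely supported exponent vectors
  are meaningful monomials.  A series in the two sets of variables x and y is a
  function of two exponent vectors (exponent of x, exponent of y).\<close>

type_synonym fps_inf = "(nat \<Rightarrow> nat) \<Rightarrow> int"
type_synonym fps_inf2 = "(nat \<Rightarrow> nat) \<Rightarrow> (nat \<Rightarrow> nat) \<Rightarrow> int"

definition supp :: "(nat \<Rightarrow> nat) \<Rightarrow> nat set" where
  "supp a = {k. a k \<noteq> 0}"

definition mulvar :: "nat \<Rightarrow> fps_inf \<Rightarrow> fps_inf" where
  "mulvar i f a = (if 1 \<le> a i then f (a(i := a i - 1)) else 0)"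

definition pderivvar :: "nat \<Rightarrow> fps_inf \<Rightarrow> fps_inf" where
  "pderivvar i f a = int (a i + 1) * f (a(i := a i + 1))"

text \<open>At the coefficient of x^a,
  only the (finitely many) indices i with a i > 0 contribute, since both
  x_i * (...) and x_i^2 * (...) have vanishing coefficient when a i = 0.\<close>
definition Xplus :: "fps_inf \<Rightarrow> fps_inf" where
  "Xplus f a = (\<Sum>i\<in>supp a. mulvar i f a - mulvar i (mulvar i (pderivvar i f)) a)"

definition Xop :: "fps_inf2 \<Rightarrow> fps_inf2" where
  "Xop F = (\<lambda>a b. Xplus (\<lambda>a'. F a' b) a)"

definition Yop :: "fps_inf2 \<Rightarrow> fps_inf2" where
  "Yop F = (\<lambda>a b. Xplus (F a) b)"

text \<open>Specialisation y = x: coefficient of x^c is the sum over a + b = c.\<close>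
definition diag_subst :: "fps_inf2 \<Rightarrow> fps_inf" where
  "diag_subst F c = (\<Sum>a\<in>{a. \<forall>k. a k \<le> c k}. F a (\<lambda>k. c k - a k))"

text \<open>Monomial symmetric function m_mu(x), the partition mu given as the multiset of its parts.\<close>
definition msym :: "nat multiset \<Rightarrow> fps_inf" where
  "msym mu a = (if finite (supp a) \<and> image_mset a (mset_set (supp a)) = mu then 1 else 0)"

definition m1_xy :: "nat \<Rightarrow> fps_inf2" where
  "m1_xy j a b = (if a = b \<and> finite (supp a) \<and> (\<forall>k. a k \<le> 1) \<and> card (supp a) = j then 1 else 0)"

end

(*
  The operator x_i - x_i^2 d/dx_i kills x_i and multiplies a monomial free of x_i by x_i.
  Hence X_+ preserves series supported on squarefree monomials x_B and acts on them by
  X_+ x_B = sum of x_(B + {i}) over i not in B, so X_+^n x_B = n! * (sum of the x_G with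
  B <= G and |G| = |B| + n).  Applied to m_(1^j)(xy) = sum of x_beta y_beta over |beta| = j,
  the operators Y_+^(r-j) and X_+^(r+s-j) give
    (r+s-j)! (r-j)! * sum over |Gamma| = r+s, |D| = r of binom(|Gamma /\ D|, j) x_Gamma y_D.
  Setting y = x turns x_Gamma x_D into x^c with all exponents at most 2; the variables of
  exponent 2 form I = Gamma /\ D, those of exponent 1 a set T.  For fixed c the pair
  (Gamma, D) is determined by E = Gamma - I, a subset of T with r+s-|I| elements whose
  complement T - E has r-|I|; there are binom(|T|, r-|I|) of them, and none unless
  |T| = 2(r-|I|) + s.  This is the coefficient of x^c on the right-hand side.
*)

theory Submission
  imports Defs "HOL-Library.Indicator_Function"
begin

definition sqfree :: "(nat \<Rightarrow> nat) \<Rightarrow> bool" where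
  "sqfree a \<longleftrightarrow> finite (supp a) \<and> (\<forall>k. a k \<le> 1)"

definition sqfree_supported :: "fps_inf \<Rightarrow> bool" where
  "sqfree_supported f \<longleftrightarrow> (\<forall>a. f a \<noteq> 0 \<longrightarrow> sqfree a)"

lemma supp_indicator [simp]: "supp (indicator D) = D"
  by (auto simp: supp_def indicator_def)

lemma sqfree_indicator [simp]: "sqfree (indicator D) \<longleftrightarrow> finite D"
  by (auto simp: sqfree_def indicator_def)

lemma sqfree_eq_indicator_supp:
  assumes "sqfree a"
  shows "a = indicator (supp a)"
proof
  fix k
  have "a k \<le> 1"
    using assms by (simp add: sqfree_def)
  then show "a k = indicator (supp a) k"
    by (auto simp: supp_def indicator_def)
qed

lemma mulvar_eq: "1 \<le> a i \<Longrightarrow> mulvar i f a = f (a(i := a i - 1))"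
  by (simp add: mulvar_def)

lemma Xplus_coeff: "Xplus f a = (\<Sum>i\<in>supp a. (2 - int (a i)) * f (a(i := a i - 1)))"
  unfolding Xplus_def
proof (rule sum.cong [OF refl])
  fix i assume "i \<in> supp a"
  then have "a i \<ge> 1" by (simp add: supp_def)
  show "mulvar i f a - mulvar i (mulvar i (pderivvar i f)) a = (2 - int (a i)) * f (a(i := a i - 1))"
  proof (cases "a i \<ge> 2")
    case True
    then obtain k where k: "a i = Suc (Suc k)"
      by (metis add_2_eq_Suc le_iff_add add.commute)
    then have "mulvar i (mulvar i (pderivvar i f)) a = int (Suc k) * f (a(i := Suc k))"
      by (simp add: mulvar_eq pderivvar_def)
    with k show ?thesis
      by (simp add: mulvar_eq algebra_simps)
  next
    case False
    with \<open>a i \<ge> 1\<close> show ?thesis by (simp add: mulvar_def)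
  qed
qed

lemma Xplus_zero [simp]: "Xplus (\<lambda>_. 0) = (\<lambda>_. 0)"
  by (rule ext) (simp add: Xplus_coeff)

lemma funpow_Xplus_zero [simp]: "(Xplus ^^ n) (\<lambda>_. 0) = (\<lambda>_. 0)"
  by (induction n) auto

text \<open>The factor \<open>2 - a i\<close> of \<open>Xplus_coeff\<close> vanishes at \<open>a i = 2\<close>, because
  \<open>x\<^sub>i - x\<^sub>i\<^sup>2 \<partial>/\<partial>x\<^sub>i\<close> kills \<open>x\<^sub>i\<close>.\<close>
lemma sqfree_supported_Xplus:
  assumes "sqfree_supported f"
  shows "sqfree_supported (Xplus f)"
  unfolding sqfree_supported_def
proof (intro allI impI)
  fix a assume "Xplus f a \<noteq> 0"
  then obtain i where i: "i \<in> supp a" and "(2 - int (a i)) * f (a(i := a i - 1)) \<noteq> 0"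
    unfolding Xplus_coeff by (rule sum.not_neutral_contains_not_neutral)
  then have "a i \<noteq> 2" and "f (a(i := a i - 1)) \<noteq> 0"
    by auto
  then have sq: "sqfree (a(i := a i - 1))"
    using assms by (simp add: sqfree_supported_def)
  then have "a i = 1"
    using i \<open>a i \<noteq> 2\<close> by (auto simp: sqfree_def supp_def dest: spec [of _ i])
  have "supp a \<subseteq> insert i (supp (a(i := a i - 1)))"
    by (auto simp: supp_def)
  then have "finite (supp a)"
    by (rule finite_subset) (use sq in \<open>simp add: sqfree_def\<close>)
  moreover have "a k \<le> 1" for k
  proof -
    have "(a(i := a i - 1)) k \<le> 1"
      using sq by (simp add: sqfree_def)
    with \<open>a i = 1\<close> show ?thesis
      by (cases "k = i") auto
  qed
  ultimately show "sqfree a"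
    by (simp add: sqfree_def)
qed

lemma sqfree_supported_funpow_Xplus: "sqfree_supported f \<Longrightarrow> sqfree_supported ((Xplus ^^ n) f)"
  by (induction n) (simp_all add: sqfree_supported_Xplus)

lemma Xplus_indicator:
  assumes "finite G"
  shows "Xplus f (indicator G) = (\<Sum>i\<in>G. f (indicator (G - {i})))"
  unfolding Xplus_coeff supp_indicator
proof (rule sum.cong [OF refl])
  fix i assume "i \<in> G"
  then have "(indicator G)(i := indicator G i - 1) = (indicator (G - {i}) :: nat \<Rightarrow> nat)"
    by (auto simp: indicator_def)
  then show "(2 - int (indicator G i)) * f ((indicator G)(i := indicator G i - 1)) = f (indicator (G - {i}))"
    using \<open>i \<in> G\<close> by simp
qed

lemma sum_subsets_remove_one:
  fixes \<phi> :: "'a set \<Rightarrow> 'b::comm_semiring_1"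
  assumes G: "finite G"
  shows "(\<Sum>i\<in>G. \<Sum>B | B \<subseteq> G - {i} \<and> card B + n = card (G - {i}). \<phi> B)
       = of_nat (Suc n) * (\<Sum>B | B \<subseteq> G \<and> card B + Suc n = card G. \<phi> B)"
proof -
  define S where "S = {B. B \<subseteq> G \<and> card B + Suc n = card G}"
  have "finite S"
    by (rule finite_subset [of _ "Pow G"]) (use G in \<open>auto simp: S_def\<close>)
  have drop_i: "{B. B \<subseteq> G - {i} \<and> card B + n = card (G - {i})} = {B \<in> S. i \<notin> B}" if "i \<in> G" for i
  proof -
    have "card G = Suc (card (G - {i}))"
      using G that by (rule card_Suc_Diff1 [symmetric])
    with that show ?thesis
      by (auto simp: S_def)
  qed
  have card_rest: "card {i \<in> G. i \<notin> B} = Suc n" if "B \<in> S" for B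
  proof -
    have "B \<subseteq> G" "card B + Suc n = card G"
      using that by (auto simp: S_def)
    moreover have "{i \<in> G. i \<notin> B} = G - B"
      by auto
    moreover have "card (G - B) = card G - card B"
      using finite_subset [OF \<open>B \<subseteq> G\<close> G] \<open>B \<subseteq> G\<close> by (rule card_Diff_subset)
    ultimately show ?thesis
      by simp
  qed
  have "(\<Sum>i\<in>G. \<Sum>B | B \<subseteq> G - {i} \<and> card B + n = card (G - {i}). \<phi> B)
      = (\<Sum>i\<in>G. \<Sum>B \<in> {B \<in> S. i \<notin> B}. \<phi> B)"
    using drop_i by (intro sum.cong) auto
  also have "\<dots> = (\<Sum>B\<in>S. \<Sum>i \<in> {i \<in> G. i \<notin> B}. \<phi> B)"
    using G \<open>finite S\<close> by (rule sum.swap_restrict)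
  also have "\<dots> = (\<Sum>B\<in>S. of_nat (Suc n) * \<phi> B)"
    using card_rest by (intro sum.cong) auto
  finally show ?thesis
    by (simp add: S_def sum_distrib_left)
qed

lemma funpow_Xplus_indicator:
  assumes "sqfree_supported f" and "finite G"
  shows "(Xplus ^^ n) f (indicator G) = fact n * (\<Sum>B | B \<subseteq> G \<and> card B + n = card G. f (indicator B))"
  using assms(2)
proof (induction n arbitrary: G)
  case 0
  then have "{B. B \<subseteq> G \<and> card B + 0 = card G} = {G}"
    using card_subset_eq by auto
  then show ?case by simp
next
  case (Suc n)
  have "(Xplus ^^ Suc n) f (indicator G) = (\<Sum>i\<in>G. (Xplus ^^ n) f (indicator (G - {i})))"
    using Suc.prems by (simp add: Xplus_indicator)
  also have "\<dots> = fact n * (\<Sum>i\<in>G. \<Sum>B | B \<subseteq> G - {i} \<and> card B + n = card (G - {i}). f (indicator B))"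
    using Suc by (simp add: sum_distrib_left)
  also have "\<dots> = fact n * (of_nat (Suc n) * (\<Sum>B | B \<subseteq> G \<and> card B + Suc n = card G. f (indicator B)))"
    by (simp only: sum_subsets_remove_one [OF Suc.prems])
  also have "\<dots> = fact (Suc n) * (\<Sum>B | B \<subseteq> G \<and> card B + Suc n = card G. f (indicator B))"
    by (simp add: algebra_simps)
  finally show ?case .
qed

lemma Yop_funpow: "(Yop ^^ m) F = (\<lambda>a. (Xplus ^^ m) (F a))"
  by (induction m) (simp_all add: Yop_def)

lemma Xop_funpow: "(Xop ^^ n) F = (\<lambda>a b. (Xplus ^^ n) (\<lambda>a'. F a' b) a)"
  by (induction n) (simp_all add: Xop_def)

lemma m1_xy_eq: "m1_xy j a b = (if a = b \<and> sqfree a \<and> card (supp a) = j then 1 else 0)"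
  by (simp add: m1_xy_def sqfree_def)

lemma m1_xy_eq_zero: "\<not> sqfree a \<Longrightarrow> m1_xy j a = (\<lambda>_. 0)"
  by (simp add: m1_xy_eq fun_eq_iff)

lemma sqfree_supported_m1_xy: "sqfree_supported (m1_xy j a)"
  by (simp add: sqfree_supported_def m1_xy_eq)

lemma funpow_Xplus_m1_xy:
  assumes D: "finite D"
  shows "(Xplus ^^ m) (m1_xy j a) (indicator D) =
    (if sqfree a \<and> supp a \<subseteq> D \<and> card (supp a) = j \<and> card D = j + m then fact m else 0)"
proof (cases "sqfree a")
  case False
  then show ?thesis
    by (simp add: m1_xy_eq_zero)
next
  case True
  define S where "S = {B. B \<subseteq> D \<and> card B + m = card D}"
  have "finite S"
    by (rule finite_subset [of _ "Pow D"]) (use D in \<open>auto simp: S_def\<close>)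
  have "(Xplus ^^ m) (m1_xy j a) (indicator D) = fact m * (\<Sum>B\<in>S. m1_xy j a (indicator B))"
    unfolding S_def using sqfree_supported_m1_xy D by (rule funpow_Xplus_indicator)
  also have "(\<Sum>B\<in>S. m1_xy j a (indicator B)) = (\<Sum>B\<in>S. if supp a = B then (if card (supp a) = j then 1 else 0) else 0)"
    using sqfree_eq_indicator_supp [OF True] True by (intro sum.cong) (auto simp: m1_xy_eq)
  also have "\<dots> = (if supp a \<in> S then (if card (supp a) = j then 1 else 0) else 0)"
    using \<open>finite S\<close> by (rule sum.delta')
  finally show ?thesis
    using True by (auto simp: S_def)
qed

lemma funpow_Xplus_Yop_m1_xy_indicator:
  assumes \<Gamma>: "finite \<Gamma>" and D: "finite D"
  shows "(Xplus ^^ n) (\<lambda>a'. (Xplus ^^ m) (m1_xy j a') (indicator D)) (indicator \<Gamma>) =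
    (if card \<Gamma> = j + n \<and> card D = j + m then fact n * fact m * of_nat (card (\<Gamma> \<inter> D) choose j) else 0)"
proof -
  define h where "h a' = (Xplus ^^ m) (m1_xy j a') (indicator D)" for a'
  define S where "S = {B. B \<subseteq> \<Gamma> \<and> card B + n = card \<Gamma>}"
  have h_eq: "h a' =
      (if sqfree a' \<and> supp a' \<subseteq> D \<and> card (supp a') = j \<and> card D = j + m then fact m else 0)" for a'
    unfolding h_def using D by (rule funpow_Xplus_m1_xy)
  then have "sqfree_supported h"
    by (simp add: sqfree_supported_def)
  have "finite S"
    by (rule finite_subset [of _ "Pow \<Gamma>"]) (use \<Gamma> in \<open>auto simp: S_def\<close>)
  have "(Xplus ^^ n) h (indicator \<Gamma>) = fact n * (\<Sum>B\<in>S. h (indicator B))"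
    unfolding S_def using \<open>sqfree_supported h\<close> \<Gamma> by (rule funpow_Xplus_indicator)
  also have "(\<Sum>B\<in>S. h (indicator B)) = (\<Sum>B\<in>S. if B \<subseteq> D \<and> card B = j \<and> card D = j + m then fact m else 0)"
  proof (rule sum.cong [OF refl])
    fix B assume "B \<in> S"
    then have "finite B"
      using finite_subset \<Gamma> by (auto simp: S_def)
    then show "h (indicator B) = (if B \<subseteq> D \<and> card B = j \<and> card D = j + m then fact m else 0)"
      by (simp add: h_eq)
  qed
  also have "\<dots> = (\<Sum>B\<in>{B \<in> S. B \<subseteq> D \<and> card B = j \<and> card D = j + m}. fact m)"
    by (rule sum.inter_filter [OF \<open>finite S\<close>, symmetric])
  also have "{B \<in> S. B \<subseteq> D \<and> card B = j \<and> card D = j + m} =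
      (if card \<Gamma> = j + n \<and> card D = j + m then {B. B \<subseteq> \<Gamma> \<inter> D \<and> card B = j} else {})"
    by (auto simp: S_def)
  finally show ?thesis
    using \<Gamma> n_subsets [of "\<Gamma> \<inter> D" j] by (simp add: h_def)
qed

lemma coeff_Xop_Yop_m1_xy:
  "(Xop ^^ n) ((Yop ^^ m) (m1_xy j)) a b =
    (if sqfree a \<and> sqfree b \<and> card (supp a) = j + n \<and> card (supp b) = j + m
     then fact n * fact m * of_nat (card (supp a \<inter> supp b) choose j) else 0)"
proof -
  define h where "h a' = (Xplus ^^ m) (m1_xy j a') b" for a'
  have lhs: "(Xop ^^ n) ((Yop ^^ m) (m1_xy j)) a b = (Xplus ^^ n) h a"
    by (simp add: Xop_funpow Yop_funpow h_def [abs_def])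
  have h_zero: "h a' = 0" if "\<not> sqfree a' \<or> \<not> sqfree b" for a'
  proof (cases "sqfree a'")
    case True
    have "sqfree_supported ((Xplus ^^ m) (m1_xy j a'))"
      by (rule sqfree_supported_funpow_Xplus [OF sqfree_supported_m1_xy])
    with True that show ?thesis
      unfolding sqfree_supported_def h_def by blast
  qed (simp add: h_def m1_xy_eq_zero)
  consider "sqfree a" "sqfree b" | "\<not> sqfree b" | "sqfree b" "\<not> sqfree a"
    by blast
  then show ?thesis
  proof cases
    case 1
    then have "a = indicator (supp a)" "b = indicator (supp b)" "finite (supp a)" "finite (supp b)"
      by (auto simp: sqfree_eq_indicator_supp sqfree_def)
    with 1 show ?thesis
      unfolding lhs h_def by (metis funpow_Xplus_Yop_m1_xy_indicator)
  next
    case 2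
    with h_zero have "h = (\<lambda>_. 0)"
      by auto
    with 2 show ?thesis
      unfolding lhs by simp
  next
    case 3
    with h_zero have "sqfree_supported ((Xplus ^^ n) h)"
      by (intro sqfree_supported_funpow_Xplus) (auto simp: sqfree_supported_def)
    with 3 show ?thesis
      unfolding lhs sqfree_supported_def by auto
  qed
qed

lemma finite_bounded_exps:
  assumes "finite (supp c)"
  shows "finite {a. \<forall>k. a k \<le> c k}"
proof (rule finite_subset)
  let ?M = "\<Sum>k\<in>supp c. c k"
  let ?A = "{a. \<forall>k. (k \<in> supp c \<longrightarrow> a k \<in> {..?M}) \<and> (k \<notin> supp c \<longrightarrow> a k = 0)}"
  show "{a. \<forall>k. a k \<le> c k} \<subseteq> ?A"
  proof (intro subsetI CollectI allI conjI impI)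
    fix a k assume "a \<in> {a. \<forall>k. a k \<le> c k}"
    then have "a k \<le> c k" by simp
    moreover have "c k \<le> ?M" if "k \<in> supp c"
      using assms that by (intro member_le_sum) auto
    ultimately show "k \<in> supp c \<Longrightarrow> a k \<in> {..?M}" "k \<notin> supp c \<Longrightarrow> a k = 0"
      by (auto simp: supp_def)
  qed
  show "finite ?A"
    using assms finite_atMost by (rule finite_set_of_finite_funs)
qed

lemma diag_subst_sqfree:
  assumes fin: "finite (supp c)" and le2: "\<And>k. c k \<le> 2"
    and F: "\<And>a b. F a b \<noteq> 0 \<Longrightarrow> sqfree a \<and> sqfree b"
  defines "I \<equiv> {k. c k = 2}" and "T \<equiv> {k. c k = 1}"
  shows "diag_subst F c = (\<Sum>E\<in>Pow T. F (indicator (I \<union> E)) (indicator (I \<union> (T - E))))"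
proof -
  let ?A = "{a. \<forall>k. a k \<le> c k}"
  let ?e = "\<lambda>E. indicator (I \<union> E) :: nat \<Rightarrow> nat"
  have disjoint: "I \<inter> T = {}"
    by (auto simp: I_def T_def)
  have "?e ` Pow T \<subseteq> ?A"
    by (auto simp: indicator_def I_def T_def)
  moreover have "inj_on ?e (Pow T)"
  proof (rule inj_onI)
    fix E E' assume "E \<in> Pow T" "E' \<in> Pow T" "?e E = ?e E'"
    then have "I \<union> E = I \<union> E'" "E \<subseteq> T" "E' \<subseteq> T"
      by (metis supp_indicator, auto)
    with disjoint show "E = E'"
      by blast
  qed
  moreover have rest: "(\<lambda>k. c k - ?e E k) = indicator (I \<union> (T - E))" if "E \<subseteq> T" for E
  proof
    fix k show "c k - ?e E k = indicator (I \<union> (T - E)) k"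
      using that le2 [of k] by (auto simp: indicator_def I_def T_def)
  qed
  moreover have "F a (\<lambda>k. c k - a k) = 0" if "a \<in> ?A - ?e ` Pow T" for a
  proof (rule ccontr)
    assume "F a (\<lambda>k. c k - a k) \<noteq> 0"
    then have a: "sqfree a" and b: "sqfree (\<lambda>k. c k - a k)"
      using F by blast+
    have "supp a = I \<union> (supp a \<inter> T)"
    proof (rule set_eqI)
      fix k
      have "a k \<le> 1" "c k - a k \<le> 1" "a k \<le> c k" "c k \<le> 2"
        using a b that le2 by (auto simp: sqfree_def)
      then show "k \<in> supp a \<longleftrightarrow> k \<in> I \<union> (supp a \<inter> T)"
        by (auto simp: supp_def I_def T_def)
    qed
    then have "a = ?e (supp a \<inter> T)"
      using sqfree_eq_indicator_supp [OF a] by simp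
    with that show False
      by blast
  qed
  ultimately have "diag_subst F c = (\<Sum>a\<in>?e ` Pow T. F a (\<lambda>k. c k - a k))"
    unfolding diag_subst_def using finite_bounded_exps [OF fin]
    by (intro sum.mono_neutral_right) auto
  also have "\<dots> = (\<Sum>E\<in>Pow T. F (indicator (I \<union> E)) (indicator (I \<union> (T - E))))"
    using \<open>inj_on ?e (Pow T)\<close> rest by (simp add: sum.reindex)
  finally show ?thesis .
qed

lemma diag_subst_sqfree_eq_0:
  assumes "2 < c k" and F: "\<And>a b. F a b \<noteq> 0 \<Longrightarrow> sqfree a \<and> sqfree b"
  shows "diag_subst F c = 0"
  unfolding diag_subst_def
proof (rule sum.neutral, rule ballI, rule ccontr)
  fix a assume "a \<in> {a. \<forall>k. a k \<le> c k}" and "F a (\<lambda>k. c k - a k) \<noteq> 0"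
  then have "a k \<le> 1" "c k - a k \<le> 1"
    using F by (auto simp: sqfree_def)
  with \<open>2 < c k\<close> show False
    by simp
qed

lemma replicate_mset_add_eq_iff:
  assumes "x \<noteq> y"
  shows "replicate_mset i x + replicate_mset t y = replicate_mset i' x + replicate_mset t' y \<longleftrightarrow> i = i' \<and> t = t'"
proof
  assume eq: "replicate_mset i x + replicate_mset t y = replicate_mset i' x + replicate_mset t' y"
  show "i = i' \<and> t = t'"
    using arg_cong [OF eq, of "\<lambda>M. count M x"] arg_cong [OF eq, of "\<lambda>M. count M y"] assms by simp
qed simp

lemma exponent_parts_le_two:
  assumes fin: "finite (supp c)" and le2: "\<forall>k. c k \<le> 2"
  shows "image_mset c (mset_set (supp c)) = replicate_mset (card {k. c k = 2}) 2 + replicate_mset (card {k. c k = 1}) 1"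
proof -
  let ?I = "{k. c k = 2}" and ?T = "{k. c k = 1}"
  have sc: "supp c = ?I \<union> ?T"
  proof (rule set_eqI)
    fix k show "k \<in> supp c \<longleftrightarrow> k \<in> ?I \<union> ?T"
      using le2 [rule_format, of k] by (auto simp: supp_def)
  qed
  then have "finite ?I" "finite ?T"
    using fin by auto
  have "image_mset c (mset_set (supp c)) = image_mset c (mset_set ?I) + image_mset c (mset_set ?T)"
    unfolding sc using \<open>finite ?I\<close> \<open>finite ?T\<close> by (subst mset_set_Union) auto
  also have "image_mset c (mset_set ?I) = image_mset (\<lambda>_. 2) (mset_set ?I)"
    by (rule image_mset_cong) (use \<open>finite ?I\<close> in auto)
  also have "image_mset c (mset_set ?T) = image_mset (\<lambda>_. 1) (mset_set ?T)"
    by (rule image_mset_cong) (use \<open>finite ?T\<close> in auto)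
  finally show ?thesis
    by (simp add: image_mset_const_eq)
qed

lemma msym_two_one:
  assumes "finite (supp c)" and "\<forall>k. c k \<le> 2"
  shows "msym (replicate_mset i 2 + replicate_mset t 1) c =
    (if i = card {k. c k = 2} \<and> t = card {k. c k = 1} then 1 else 0)"
  using assms by (auto simp: msym_def exponent_parts_le_two replicate_mset_add_eq_iff)

lemma sum_msym_two_one:
  assumes "finite (supp c)" and "\<forall>k. c k \<le> 2" and "finite A"
  shows "(\<Sum>i\<in>A. f i * msym (replicate_mset i 2 + replicate_mset (g i) 1) c) =
    (if card {k. c k = 2} \<in> A \<and> g (card {k. c k = 2}) = card {k. c k = 1} then f (card {k. c k = 2}) else 0)"
proof -
  have "(\<Sum>i\<in>A. f i * msym (replicate_mset i 2 + replicate_mset (g i) 1) c) =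
      (\<Sum>i\<in>A. if i = card {k. c k = 2} then (if g i = card {k. c k = 1} then f i else 0) else 0)"
    unfolding msym_two_one [OF assms(1,2)] by (intro sum.cong) auto
  also have "\<dots> = (if card {k. c k = 2} \<in> A \<and> g (card {k. c k = 2}) = card {k. c k = 1}
      then f (card {k. c k = 2}) else 0)"
    using assms(3) by (simp add: sum.delta)
  finally show ?thesis .
qed

lemma msym_two_one_eq_0:
  assumes fin: "finite (supp c)" and "2 < c k"
  shows "msym (replicate_mset i 2 + replicate_mset t 1) c = 0"
proof -
  have "c k \<in># image_mset c (mset_set (supp c))"
    using assms by (simp add: supp_def)
  moreover have "c k \<notin># replicate_mset i 2 + replicate_mset t 1"
    using \<open>2 < c k\<close> by (auto simp: in_replicate_mset)
  ultimately show ?thesis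
    unfolding msym_def by metis
qed

lemma card_subsets_card_Diff:
  assumes "finite T"
  shows "card {E. E \<subseteq> T \<and> card E = k \<and> card (T - E) = l} = (if card T = k + l then card T choose l else 0)"
proof -
  have card_split: "card E + card (T - E) = card T" if "E \<subseteq> T" for E
    using that assms by (simp add: card_Diff_subset card_mono finite_subset [OF that assms])
  show ?thesis
  proof (cases "card T = k + l")
    case True
    then have "{E. E \<subseteq> T \<and> card E = k \<and> card (T - E) = l} = {E. E \<subseteq> T \<and> card E = k}"
      by (auto dest: card_split)
    with True assms show ?thesis
      by (simp add: n_subsets binomial_symmetric [of k "k + l", simplified])
  next
    case False
    then have "{E. E \<subseteq> T \<and> card E = k \<and> card (T - E) = l} = {}"
      by (auto dest: card_split)
    with False show ?thesis
      by (simp only: card.empty if_False)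
  qed
qed

lemma sum_Pow_card_card_Diff:
  assumes "finite T"
  shows "(\<Sum>E\<in>Pow T. if card E = k \<and> card (T - E) = l then x else 0) =
    (if card T = k + l then of_nat (card T choose l) * x else 0)"
proof -
  have "(\<Sum>E\<in>Pow T. if card E = k \<and> card (T - E) = l then x else 0) =
      (\<Sum>E\<in>{E \<in> Pow T. card E = k \<and> card (T - E) = l}. x)"
    by (rule sum.inter_filter [symmetric]) (use assms in simp)
  also have "{E \<in> Pow T. card E = k \<and> card (T - E) = l} = {E. E \<subseteq> T \<and> card E = k \<and> card (T - E) = l}"
    by auto
  finally show ?thesis
    using assms by (simp add: card_subsets_card_Diff)
qed

lemma diag_subst_Xop_Yop_m1_xy:
  assumes "j \<le> r" and fin: "finite (supp c)" and le2: "\<And>k. c k \<le> 2"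
  defines "I \<equiv> {k. c k = 2}" and "T \<equiv> {k. c k = 1}"
  shows "diag_subst ((Xop ^^ (r + s - j)) ((Yop ^^ (r - j)) (m1_xy j))) c =
    (if card I \<le> r \<and> card T = 2 * (r - card I) + s
     then fact (r + s - j) * fact (r - j) * of_nat (card I choose j) * of_nat (card T choose (r - card I))
     else 0)"
proof -
  let ?F = "(Xop ^^ (r + s - j)) ((Yop ^^ (r - j)) (m1_xy j))"
  let ?K = "fact (r + s - j) * fact (r - j) * of_nat (card I choose j) :: int"
  have "I \<subseteq> supp c" "T \<subseteq> supp c"
    by (auto simp: I_def T_def supp_def)
  then have "finite I" "finite T"
    using fin finite_subset by blast+
  have "I \<inter> T = {}"
    by (auto simp: I_def T_def)
  have summand: "?F (indicator (I \<union> E)) (indicator (I \<union> (T - E))) =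
      (if card I \<le> r \<and> card E = r + s - card I \<and> card (T - E) = r - card I then ?K else 0)"
    if "E \<subseteq> T" for E
  proof -
    have "finite E"
      using that \<open>finite T\<close> finite_subset by blast
    have "(I \<union> E) \<inter> (I \<union> (T - E)) = I"
      using that \<open>I \<inter> T = {}\<close> by blast
    moreover have "card (I \<union> E) = card I + card E" "card (I \<union> (T - E)) = card I + card (T - E)"
      using that \<open>I \<inter> T = {}\<close> \<open>finite I\<close> \<open>finite T\<close> \<open>finite E\<close>
      by (auto intro: card_Un_disjoint)
    ultimately show ?thesis
      using \<open>j \<le> r\<close> \<open>finite I\<close> \<open>finite T\<close> \<open>finite E\<close> by (auto simp: coeff_Xop_Yop_m1_xy)
  qed
  have "diag_subst ?F c = (\<Sum>E\<in>Pow T. ?F (indicator (I \<union> E)) (indicator (I \<union> (T - E))))"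
    unfolding I_def T_def using fin le2 by (rule diag_subst_sqfree) (simp add: coeff_Xop_Yop_m1_xy split: if_splits)
  also have "\<dots> = (if card I \<le> r
      then (\<Sum>E\<in>Pow T. if card E = r + s - card I \<and> card (T - E) = r - card I then ?K else 0) else 0)"
    using summand by (simp add: sum.neutral)
  also have "\<dots> = (if card I \<le> r \<and> card T = 2 * (r - card I) + s
      then of_nat (card T choose (r - card I)) * ?K else 0)"
  proof (cases "card I \<le> r")
    case True
    then have "card T = (r + s - card I) + (r - card I) \<longleftrightarrow> card T = 2 * (r - card I) + s"
      by arith
    with True \<open>finite T\<close> show ?thesis
      by (simp add: sum_Pow_card_card_Diff)
  qed simp
  finally show ?thesis
    by (simp add: algebra_simps)
qed

theorem mainTheorem6:
  fixes r s j :: nat and c :: "nat \<Rightarrow> nat"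
  assumes "j \<le> r" and "finite (supp c)"
  shows "diag_subst ((Xop ^^ (r + s - j)) ((Yop ^^ (r - j)) (m1_xy j))) c =
    (\<Sum>i\<in>{j..r}. int ((i choose j) * ((2 * (r - i) + s) choose (r - i))
                    * fact (r - j) * fact (r + s - j))
       * msym (replicate_mset i 2 + replicate_mset (2 * (r - i) + s) 1) c)"
proof (cases "\<forall>k. c k \<le> 2")
  case True
  define I where "I = {k. c k = 2}"
  define T where "T = {k. c k = 1}"
  have "diag_subst ((Xop ^^ (r + s - j)) ((Yop ^^ (r - j)) (m1_xy j))) c =
      (if card I \<le> r \<and> card T = 2 * (r - card I) + s
       then fact (r + s - j) * fact (r - j) * of_nat (card I choose j) * of_nat (card T choose (r - card I)) else 0)"
    unfolding I_def T_def using assms True by (intro diag_subst_Xop_Yop_m1_xy) auto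
  moreover have "(\<Sum>i\<in>{j..r}. int ((i choose j) * ((2 * (r - i) + s) choose (r - i))
                    * fact (r - j) * fact (r + s - j))
       * msym (replicate_mset i 2 + replicate_mset (2 * (r - i) + s) 1) c) =
      (if card I \<in> {j..r} \<and> 2 * (r - card I) + s = card T
       then int ((card I choose j) * ((2 * (r - card I) + s) choose (r - card I))
                 * fact (r - j) * fact (r + s - j))
       else 0)"
    unfolding I_def T_def using assms(2) True by (rule sum_msym_two_one) simp
  ultimately show ?thesis
    by (auto simp: of_nat_mult)
next
  case False
  then obtain k where "2 < c k"
    by (auto simp: not_le)
  then have "diag_subst ((Xop ^^ (r + s - j)) ((Yop ^^ (r - j)) (m1_xy j))) c = 0"
    by (rule diag_subst_sqfree_eq_0) (simp add: coeff_Xop_Yop_m1_xy split: if_splits)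
  moreover have "msym (replicate_mset i 2 + replicate_mset t 1) c = 0" for i t
    using assms(2) \<open>2 < c k\<close> by (rule msym_two_one_eq_0)
  ultimately show ?thesis
    by simp
qed

end
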